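(* Let $m\ge1$, let $\vartheta=\vartheta_m$ be the degree-$m$ random metallic mean substitution, $\mathcal{S}_m=\{a^iba^{m-i}\mid0\le i\le m\}$, $p\ge0$, and $u$ a finite word over $\{a,b\}$. If the set $\vartheta^p(a)\,u\,\mathcal{S}_m$ contains a $\vartheta$-legal word, then for every $0\le j\le m$ the set $\vartheta^p(a)\,\vartheta(u)\,(\vartheta(b))^j\,\mathcal{S}_m$ contains a $\vartheta$-legal word.
   Context: The degree-$m$ random metallic mean substitution is $\vartheta_m\colon a\mapsto\{a^iba^{m-i}\mid0\le i\le m\},\ b\mapsto\{a\}$ (for $m=1$ this is the random Fibonacci substitution $a\mapsto\{ab,ba\}, b\mapsto\{a\}$). It is extended to words by set concatenation $\vartheta(w_1\cdots w_k)=\vartheta(w_1)\cdots\vartheta(w_k)$ with $AB=\{xy\mid x\in A,y\in B\}$ (single words identified with singletons), and to sets by unions; $\vartheta^p$ is the $p$-fold iterate, $\vartheta^0(a)=\{a\}$; for a set $A$, $A^0=\{\text{empty word}\}$ and $A^j$ is the $j$-fold set concatenation. A word is $\vartheta$-legal if it is a subword of some word in $\vartheta^k(x)$ for some $k\ge0$ and letter $x$. *)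

theory Defs
  imports Main "HOL-Library.Sublist"
begin

datatype letter = a | b

type_synonym word = "letter list"

definition setcat :: "word set \<Rightarrow> word set \<Rightarrow> word set" where
  "setcat X Y = {x @ y | x y. x \<in> X \<and> y \<in> Y}"

fun setpow :: "word set \<Rightarrow> nat \<Rightarrow> word set" where
  "setpow X 0 = {[]}"
| "setpow X (Suc j) = setcat X (setpow X j)"

definition metallicS :: "nat \<Rightarrow> word set" where
  "metallicS m = {replicate i a @ [b] @ replicate (m - i) a | i. i \<le> m}"

fun theta :: "nat \<Rightarrow> letter \<Rightarrow> word set" where
  "theta m a = metallicS m"
| "theta m b = {[a]}"

fun subst_word :: "(letter \<Rightarrow> word set) \<Rightarrow> word \<Rightarrow> word set" where
  "subst_word \<sigma> [] = {[]}"
| "subst_word \<sigma> (x # w) = setcat (\<sigma> x) (subst_word \<sigma> w)"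

definition subst_set :: "(letter \<Rightarrow> word set) \<Rightarrow> word set \<Rightarrow> word set" where
  "subst_set \<sigma> W = (\<Union>w\<in>W. subst_word \<sigma> w)"

definition subst_iter :: "(letter \<Rightarrow> word set) \<Rightarrow> nat \<Rightarrow> word set \<Rightarrow> word set" where
  "subst_iter \<sigma> p W = (subst_set \<sigma> ^^ p) W"

definition legal :: "(letter \<Rightarrow> word set) \<Rightarrow> word \<Rightarrow> bool" where
  "legal \<sigma> v \<longleftrightarrow> (\<exists>k x w. w \<in> subst_iter \<sigma> k {[x]} \<and> sublist v w)"

end

theory Submission
  imports Defs
begin

text \<open>
Take a legal word \<open>x u s\<close> with \<open>x \<in> \<vartheta>\<^sup>p(a)\<close> and \<open>s \<in> S\<^sub>m\<close> and apply \<open>\<vartheta>\<close> once more; the result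
stays legal. Two choices of images make it contain the required word. First, all words of
\<open>S\<^sub>m = \<vartheta>(a)\<close> have a common image under \<open>\<vartheta>\<close>, hence \<open>\<vartheta>(\<vartheta>\<^sup>p(a))\<close> meets
\<open>\<vartheta>\<^sup>p(b a\<^sup>m) = \<vartheta>\<^sup>p(b a\<^sup>m\<^sup>-\<^sup>1) \<vartheta>\<^sup>p(a)\<close>, so some image of \<open>x\<close> ends in a word \<open>x' \<in> \<vartheta>\<^sup>p(a)\<close>.
Second, that common image of the words of \<open>S\<^sub>m\<close> can be chosen to begin with \<open>a\<^sup>j s'\<close> for
some \<open>s' \<in> S\<^sub>m\<close>. Cutting off the surrounding pieces leaves \<open>x' \<vartheta>(u) a\<^sup>j s'\<close>, and \<open>\<vartheta>(b)\<^sup>j = {a\<^sup>j}\<close>.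
\<close>

lemma setcatI: "x \<in> X \<Longrightarrow> y \<in> Y \<Longrightarrow> x @ y \<in> setcat X Y"
  unfolding setcat_def by blast

lemma setcatE:
  assumes "z \<in> setcat X Y"
  obtains x y where "z = x @ y" "x \<in> X" "y \<in> Y"
  using assms unfolding setcat_def by blast

lemma setcat_assoc: "setcat (setcat X Y) Z = setcat X (setcat Y Z)"
  unfolding setcat_def by (auto, metis append.assoc, metis append.assoc)

lemma setcat_Nil_left [simp]: "setcat {[]} X = X"
  unfolding setcat_def by auto

lemma setcat_Nil_right [simp]: "setcat X {[]} = X"
  unfolding setcat_def by auto

lemma setcat_singletons [simp]: "setcat {x} {y} = {x @ y}"
  unfolding setcat_def by auto

lemma concat_in_setpow: "\<forall>w\<in>set ws. w \<in> X \<Longrightarrow> concat ws \<in> setpow X (length ws)"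
  by (induction ws) (auto intro: setcatI)

lemma subst_word_append:
  "subst_word \<sigma> (u @ v) = setcat (subst_word \<sigma> u) (subst_word \<sigma> v)"
  by (induction u) (simp_all add: setcat_assoc)

lemma subst_word_replicate: "subst_word \<sigma> (replicate n x) = setpow (\<sigma> x) n"
  by (induction n) auto

lemma subst_set_setcat:
  "subst_set \<sigma> (setcat A B) = setcat (subst_set \<sigma> A) (subst_set \<sigma> B)"
proof
  show "subst_set \<sigma> (setcat A B) \<subseteq> setcat (subst_set \<sigma> A) (subst_set \<sigma> B)"
    unfolding subst_set_def
    by (auto simp: subst_word_append elim!: setcatE intro!: setcatI)
  show "setcat (subst_set \<sigma> A) (subst_set \<sigma> B) \<subseteq> subst_set \<sigma> (setcat A B)"
  proof
    fix z assume "z \<in> setcat (subst_set \<sigma> A) (subst_set \<sigma> B)"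
    then obtain x y u v where "z = x @ y" "u \<in> A" "x \<in> subst_word \<sigma> u"
        "v \<in> B" "y \<in> subst_word \<sigma> v"
      unfolding subst_set_def by (auto elim!: setcatE)
    then show "z \<in> subst_set \<sigma> (setcat A B)"
      unfolding subst_set_def
      by (auto simp: subst_word_append intro!: setcatI bexI[of _ "u @ v"])
  qed
qed

lemma subst_iter_0 [simp]: "subst_iter \<sigma> 0 W = W"
  unfolding subst_iter_def by simp

lemma subst_iter_Suc: "subst_iter \<sigma> (Suc k) W = subst_set \<sigma> (subst_iter \<sigma> k W)"
  unfolding subst_iter_def by simp

lemma subst_iter_append:
  "subst_iter \<sigma> k {u @ v} = setcat (subst_iter \<sigma> k {u}) (subst_iter \<sigma> k {v})"
  by (induction k) (simp_all add: subst_iter_Suc subst_set_setcat)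

lemma subst_word_nonempty:
  assumes "\<And>c. \<sigma> c \<noteq> {}"
  shows "subst_word \<sigma> w \<noteq> {}"
proof (induction w)
  case (Cons c w)
  then obtain z where "z \<in> subst_word \<sigma> w" by blast
  moreover obtain y where "y \<in> \<sigma> c" using assms by blast
  ultimately show ?case by (auto intro: setcatI)
qed simp

lemma legal_sublist: "legal \<sigma> w \<Longrightarrow> sublist v w \<Longrightarrow> legal \<sigma> v"
  unfolding legal_def by (meson sublist_order.dual_order.trans)

lemma legal_subst_word:
  assumes nonempty: "\<And>c. \<sigma> c \<noteq> {}" and "legal \<sigma> v" "z \<in> subst_word \<sigma> v"
  shows "legal \<sigma> z"
proof -
  obtain k c w where w: "w \<in> subst_iter \<sigma> k {[c]}" "sublist v w"
    using \<open>legal \<sigma> v\<close> unfolding legal_def by blast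
  then obtain l r where "w = l @ v @ r" unfolding sublist_def by blast
  moreover obtain l' r' where "l' \<in> subst_word \<sigma> l" "r' \<in> subst_word \<sigma> r"
    using subst_word_nonempty[of \<sigma>, OF nonempty] by blast
  ultimately have "l' @ z @ r' \<in> subst_word \<sigma> w"
    using \<open>z \<in> subst_word \<sigma> v\<close> by (simp add: subst_word_append setcatI)
  then have "l' @ z @ r' \<in> subst_iter \<sigma> (Suc k) {[c]}"
    using w(1) by (auto simp: subst_iter_Suc subst_set_def)
  then show ?thesis unfolding legal_def by (metis sublist_appendI)
qed

definition letter_images_meet :: "(letter \<Rightarrow> word set) \<Rightarrow> bool" where
  "letter_images_meet \<sigma> \<longleftrightarrow>
     (\<forall>c. \<forall>x\<in>\<sigma> c. \<forall>y\<in>\<sigma> c. subst_word \<sigma> x \<inter> subst_word \<sigma> y \<noteq> {})"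

lemma subst_word_images_meet:
  assumes "letter_images_meet \<sigma>" "x \<in> subst_word \<sigma> w" "y \<in> subst_word \<sigma> w"
  shows "subst_word \<sigma> x \<inter> subst_word \<sigma> y \<noteq> {}"
  using assms(2,3)
proof (induction w arbitrary: x y)
  case (Cons c w)
  from Cons.prems obtain x1 x2 y1 y2 where "x = x1 @ x2" "y = y1 @ y2"
      "x1 \<in> \<sigma> c" "y1 \<in> \<sigma> c" "x2 \<in> subst_word \<sigma> w" "y2 \<in> subst_word \<sigma> w"
    by (auto elim!: setcatE)
  moreover from this obtain z1 z2 where
      "z1 \<in> subst_word \<sigma> x1" "z1 \<in> subst_word \<sigma> y1"
      "z2 \<in> subst_word \<sigma> x2" "z2 \<in> subst_word \<sigma> y2"
    using Cons.IH assms(1) unfolding letter_images_meet_def by blast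
  ultimately show ?case by (auto simp: subst_word_append intro: setcatI)
qed simp

lemma subst_word_meets_subst_iter:
  assumes "letter_images_meet \<sigma>" "x \<in> subst_iter \<sigma> p {[c]}" "w \<in> \<sigma> c"
  shows "\<exists>z \<in> subst_word \<sigma> x. z \<in> subst_iter \<sigma> p {w}"
  using assms(2)
proof (induction p arbitrary: x)
  case 0
  then show ?case using assms(3) by simp
next
  case (Suc p)
  then obtain x0 where x0: "x0 \<in> subst_iter \<sigma> p {[c]}" "x \<in> subst_word \<sigma> x0"
    by (auto simp: subst_iter_Suc subst_set_def)
  then obtain y where y: "y \<in> subst_word \<sigma> x0" "y \<in> subst_iter \<sigma> p {w}"
    using Suc.IH by blast
  then obtain z where "z \<in> subst_word \<sigma> x" "z \<in> subst_word \<sigma> y"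
    using subst_word_images_meet[OF assms(1) x0(2) y(1)] by blast
  then show ?case using y(2) by (auto simp: subst_iter_Suc subst_set_def)
qed

lemma metallicS_memI: "i \<le> m \<Longrightarrow> replicate i a @ [b] @ replicate (m - i) a \<in> metallicS m"
  unfolding metallicS_def by blast

lemma theta_nonempty: "theta m c \<noteq> {}"
  using metallicS_memI[of 0 m] by (cases c) auto

lemma setpow_theta_b: "setpow (theta m b) j = {replicate j a}"
  by (induction j) auto

lemma subst_word_metallicS:
  "subst_word (theta m) (replicate i a @ [b] @ replicate k a)
     = setcat (setpow (metallicS m) i) (setcat {[a]} (setpow (metallicS m) k))"
  by (simp add: subst_word_append subst_word_replicate)

lemma Cons_concat_replicate_snoc:
  "x # concat (replicate k (ys @ [x])) = concat (replicate k (x # ys)) @ [x]"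
  by (induction k) auto

text \<open>
With \<open>B = a\<^sup>m\<^sup>-\<^sup>1 b a\<close> and \<open>A = a\<^sup>m b\<close> one has \<open>a B\<^sup>k = A\<^sup>k a\<close>, so
\<open>a\<^sup>j b a\<^sup>m\<^sup>-\<^sup>j \<cdot> a B\<^sup>m\<^sup>-\<^sup>1 = (a\<^sup>j b a\<^sup>m\<^sup>-\<^sup>j A\<^sup>i\<^sup>-\<^sup>1) \<cdot> a \<cdot> B\<^sup>m\<^sup>-\<^sup>i \<in> S\<^sub>m\<^sup>i a S\<^sub>m\<^sup>m\<^sup>-\<^sup>i = \<vartheta>(a\<^sup>i b a\<^sup>m\<^sup>-\<^sup>i)\<close>
for \<open>i \<ge> 1\<close>; for \<open>i = 0\<close> it is \<open>a \<cdot> (a\<^sup>j\<^sup>-\<^sup>1 b a\<^sup>m\<^sup>-\<^sup>j\<^sup>+\<^sup>1) B\<^sup>m\<^sup>-\<^sup>1\<close>, which needs \<open>j \<ge> 1\<close>.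
\<close>

definition metallic_common_image :: "nat \<Rightarrow> nat \<Rightarrow> word" where
  "metallic_common_image m j = replicate j a @ b # replicate (m - j) a
     @ a # concat (replicate (m - 1) (replicate (m - 1) a @ [b, a]))"

lemma metallic_common_image_mem:
  assumes "1 \<le> j" "j \<le> m" "s \<in> metallicS m"
  shows "metallic_common_image m j \<in> subst_word (theta m) s"
proof -
  obtain i where i: "i \<le> m" "s = replicate i a @ [b] @ replicate (m - i) a"
    using assms(3) unfolding metallicS_def by blast
  define B where "B = replicate (m - 1) a @ [b, a]"
  define A where "A = replicate m a @ [b]"
  have B: "B \<in> metallicS m" and A: "A \<in> metallicS m"
    using metallicS_memI[of "m - 1" m] metallicS_memI[of m m] assms
    by (simp_all add: A_def B_def)
  have A_rot: "a # concat (replicate k B) = concat (replicate k A) @ [a]" for k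
  proof -
    have "A = a # replicate (m - 1) a @ [b]"
      using assms by (simp add: A_def flip: replicate_Suc)
    then show ?thesis using Cons_concat_replicate_snoc[of a k "replicate (m - 1) a @ [b]"] by (simp add: B_def)
  qed
  show ?thesis
  proof (cases i)
    case 0
    define F where "F = replicate (j - 1) a @ [b] @ replicate (m - (j - 1)) a"
    have "F \<in> metallicS m" unfolding F_def using assms by (intro metallicS_memI) auto
    then have Fs: "concat (F # replicate (m - 1) B) \<in> setpow (metallicS m) m"
      using concat_in_setpow[of "F # replicate (m - 1) B"] B assms by auto
    have eq: "metallic_common_image m j = [] @ [a] @ concat (F # replicate (m - 1) B)"
    proof -
      have "replicate (m - (j - 1)) a = replicate (m - j) a @ [a]"
        using assms by (simp add: Suc_diff_le replicate_append_same flip: replicate_Suc)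
      moreover have "replicate j a = a # replicate (j - 1) a"
        using assms by (simp flip: replicate_Suc)
      ultimately show ?thesis by (simp add: metallic_common_image_def F_def B_def)
    qed
    show ?thesis
      unfolding i(2) subst_word_metallicS 0 eq using Fs by (intro setcatI) simp_all
  next
    case (Suc i')
    define F where "F = replicate j a @ [b] @ replicate (m - j) a"
    have "F \<in> metallicS m" unfolding F_def using assms by (intro metallicS_memI)
    then have FAs: "concat (F # replicate i' A) \<in> setpow (metallicS m) i"
      using concat_in_setpow[of "F # replicate i' A"] A Suc by auto
    have Bs: "concat (replicate (m - i) B) \<in> setpow (metallicS m) (m - i)"
      using concat_in_setpow[of "replicate (m - i) B"] B by auto
    have eq: "metallic_common_image m j
        = concat (F # replicate i' A) @ [a] @ concat (replicate (m - i) B)"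
    proof -
      have "m - 1 = i' + (m - i)" using Suc i by auto
      then have "concat (replicate (m - 1) B) = concat (replicate i' B) @ concat (replicate (m - i) B)"
        by (simp add: replicate_add)
      then show ?thesis
        using A_rot[of i'] by (simp add: metallic_common_image_def F_def B_def)
    qed
    show ?thesis
      unfolding i(2) subst_word_metallicS eq using FAs Bs by (intro setcatI) simp_all
  qed
qed

lemma theta_letter_images_meet:
  assumes "1 \<le> m"
  shows "letter_images_meet (theta m)"
  unfolding letter_images_meet_def
proof (intro allI ballI)
  fix c x y assume "x \<in> theta m c" "y \<in> theta m c"
  then show "subst_word (theta m) x \<inter> subst_word (theta m) y \<noteq> {}"
    using metallic_common_image_mem[of 1 m] metallicS_memI[of 0 m] assms
    by (cases c) auto
qed

lemma metallic_common_image_prefix: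
  assumes "1 \<le> m" "j \<le> m"
  shows "\<exists>s' r. s' \<in> metallicS m \<and> metallic_common_image m (max j 1) = replicate j a @ s' @ r"
proof (cases j)
  case 0
  then have "metallic_common_image m (max j 1) = replicate j a
      @ (replicate 1 a @ [b] @ replicate (m - 1) a)
      @ a # concat (replicate (m - 1) (replicate (m - 1) a @ [b, a]))"
    by (simp add: metallic_common_image_def)
  then show ?thesis using metallicS_memI[of 1 m] assms(1) by blast
next
  case (Suc j')
  define B where "B = replicate (m - 1) a @ [b, a]"
  obtain rest where rest: "concat (replicate (m - 1) B) = replicate (m - 1) a @ rest"
    by (cases "m - 1") (auto simp: B_def)
  have "a # replicate (m - 1) a = replicate m a"
    using assms(1) by (simp flip: replicate_Suc)
  then have "replicate (m - j) a @ a # replicate (m - 1) a = replicate m a @ replicate (m - j) a"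
    by (simp flip: replicate_add add: add.commute)
  then have "metallic_common_image m (max j 1)
      = replicate j a @ ([b] @ replicate m a) @ replicate (m - j) a @ rest"
    using Suc rest by (simp add: metallic_common_image_def B_def)
  then show ?thesis using metallicS_memI[of 0 m] by auto
qed

lemma subst_word_theta_iter_suffix:
  assumes "1 \<le> m" "x \<in> subst_iter (theta m) p {[a]}"
  shows "\<exists>t x'. t @ x' \<in> subst_word (theta m) x \<and> x' \<in> subst_iter (theta m) p {[a]}"
proof -
  have split: "[b] @ replicate m a = ([b] @ replicate (m - 1) a) @ [a]"
    using assms(1) by (simp add: replicate_append_same flip: replicate_Suc)
  obtain z where "z \<in> subst_word (theta m) x"
      and "z \<in> subst_iter (theta m) p {[b] @ replicate m a}"
    using subst_word_meets_subst_iter[OF theta_letter_images_meet assms(2)]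
      assms(1) metallicS_memI[of 0 m] by fastforce
  moreover from this(2) have "z \<in> setcat (subst_iter (theta m) p {[b] @ replicate (m - 1) a})
      (subst_iter (theta m) p {[a]})"
    unfolding split subst_iter_append .
  ultimately show ?thesis by (auto elim!: setcatE)
qed

theorem mainTheorem9:
  fixes m p :: nat and u :: word
  assumes "m \<ge> 1"
    and "\<exists>v \<in> setcat (setcat (subst_iter (theta m) p {[a]}) {u}) (metallicS m).
           legal (theta m) v"
  shows "\<forall>j \<le> m. \<exists>v \<in> setcat (setcat (setcat (subst_iter (theta m) p {[a]})
                (subst_word (theta m) u)) (setpow (theta m b) j)) (metallicS m).
           legal (theta m) v"
proof (intro allI impI)
  fix j assume "j \<le> m"
  obtain x s where x: "x \<in> subst_iter (theta m) p {[a]}" and "s \<in> metallicS m"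
      and legal: "legal (theta m) ((x @ u) @ s)"
    using assms(2) by (auto elim!: setcatE)
  obtain t x' where "t @ x' \<in> subst_word (theta m) x" "x' \<in> subst_iter (theta m) p {[a]}"
    using subst_word_theta_iter_suffix[OF assms(1) x] by blast
  moreover obtain y where "y \<in> subst_word (theta m) u"
    using subst_word_nonempty[of "theta m", OF theta_nonempty] by blast
  moreover obtain s' r where "s' \<in> metallicS m"
      and common: "metallic_common_image m (max j 1) = replicate j a @ s' @ r"
    using metallic_common_image_prefix[OF assms(1) \<open>j \<le> m\<close>] by blast
  moreover have "metallic_common_image m (max j 1) \<in> subst_word (theta m) s"
    using metallic_common_image_mem \<open>s \<in> metallicS m\<close> \<open>j \<le> m\<close> assms(1) by simp
  ultimately have "metallic_common_image m (max j 1) \<in> subst_word (theta m) s" by simp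
  then have "((t @ x') @ y) @ replicate j a @ s' @ r \<in> subst_word (theta m) ((x @ u) @ s)"
    unfolding common subst_word_append using \<open>t @ x' \<in> _\<close> \<open>y \<in> _\<close> by (intro setcatI)
  then have "legal (theta m) (((t @ x') @ y) @ replicate j a @ s' @ r)"
    by (rule legal_subst_word[OF theta_nonempty legal])
  then have "legal (theta m) (((x' @ y) @ replicate j a) @ s')"
    by (rule legal_sublist) (auto simp: sublist_def)
  moreover have "((x' @ y) @ replicate j a) @ s' \<in> setcat (setcat (setcat
      (subst_iter (theta m) p {[a]}) (subst_word (theta m) u)) (setpow (theta m b) j))
      (metallicS m)"
    unfolding setpow_theta_b using \<open>x' \<in> _\<close> \<open>y \<in> _\<close> \<open>s' \<in> _\<close> by (intro setcatI) simp_all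
  ultimately show "\<exists>v \<in> setcat (setcat (setcat (subst_iter (theta m) p {[a]})
                (subst_word (theta m) u)) (setpow (theta m b) j)) (metallicS m).
           legal (theta m) v"
    by blast
qed

end
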